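(* Let $N$ and $L$ be positive integers. A perfect star path of length $N$ with constant edge length $L$ exists if and only if $L$ and $N$ are coprime, $2\le L<N/2$, and $N\ge 5$.
   Context: A path of length $N$ is a vector $p=(p_0,\dots,p_{N-1})$ whose entries are the integers $0,\dots,N-1$ in some order; indices are cyclic, $p_N=p_0$. The path differences are $d_n=p_{n+1}-p_n$, and the steps are $s_n=d_n$ if $|d_n|<N/2$; $s_n=N/2$ if $|d_n|=N/2$; $s_n=d_n-N$ if $d_n>N/2$; $s_n=d_n+N$ if $d_n<-N/2$. The edge lengths are $|s_n|$. A star path is a path with $|s_n|\neq 1$ for all $n$. A perfect star path with constant edge length $L$ is a star path with $|s_n|=L$ for all $n\in\{0,\dots,N-1\}$. *)

theory Defs
  imports Complex_Main
begin

text \<open>A path of length N: entries p 0, ..., p (N-1) are 0..N-1 in some order;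
  indices are taken cyclically (p N = p 0).\<close>
definition is_path :: "nat \<Rightarrow> (nat \<Rightarrow> nat) \<Rightarrow> bool" where
  "is_path N p \<longleftrightarrow> bij_betw p {..<N} {..<N}"

definition path_diff :: "nat \<Rightarrow> (nat \<Rightarrow> nat) \<Rightarrow> nat \<Rightarrow> int" where
  "path_diff N p n = int (p (Suc n mod N)) - int (p n)"

definition step_of :: "nat \<Rightarrow> int \<Rightarrow> real" where
  "step_of N d =
     (if real_of_int \<bar>d\<bar> < real N / 2 then real_of_int d
      else if real_of_int \<bar>d\<bar> = real N / 2 then real N / 2
      else if real_of_int d > real N / 2 then real_of_int d - real N
      else real_of_int d + real N)"

definition path_step :: "nat \<Rightarrow> (nat \<Rightarrow> nat) \<Rightarrow> nat \<Rightarrow> real" where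
  "path_step N p n = step_of N (path_diff N p n)"

definition star_path :: "nat \<Rightarrow> (nat \<Rightarrow> nat) \<Rightarrow> bool" where
  "star_path N p \<longleftrightarrow> is_path N p \<and> (\<forall>n<N. \<bar>path_step N p n\<bar> \<noteq> 1)"

definition perfect_star_path :: "nat \<Rightarrow> nat \<Rightarrow> (nat \<Rightarrow> nat) \<Rightarrow> bool" where
  "perfect_star_path N L p \<longleftrightarrow> star_path N p \<and> (\<forall>n<N. \<bar>path_step N p n\<bar> = real L)"

end

theory Submission
  imports Defs "HOL-Number_Theory.Cong"
begin

text \<open>For a difference d with |d| < N the edge length is the circular distance
  min |d| (N - |d|). In a perfect star path every difference is thus \<open>\<plusminus>L\<close> or \<open>\<plusminus>(N - L)\<close>,
  so gcd L N divides all of them and, telescoping from the vertex 0 to the vertex 1,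
  divides 1; the star condition excludes L = 1, and coprimality then excludes 2L = N.
  Conversely, for L coprime to N the path n \<mapsto> nL mod N visits every residue, and each of
  its differences is congruent to L and smaller than N in absolute value, hence equal to
  L or L - N, both of edge length L once 2L < N.\<close>

lemma abs_step_of:
  assumes "\<bar>d\<bar> < int N"
  shows "\<bar>step_of N d\<bar> = of_int (min \<bar>d\<bar> (int N - \<bar>d\<bar>))"
  using assms unfolding step_of_def by (simp add: min_def) linarith

lemma abs_step_of_eq_iff:
  assumes "\<bar>d\<bar> < int N"
  shows "\<bar>step_of N d\<bar> = real L \<longleftrightarrow> 2 * L \<le> N \<and> (\<bar>d\<bar> = int L \<or> \<bar>d\<bar> = int N - int L)"
  unfolding abs_step_of[OF assms] by (auto simp: min_def)

lemma abs_path_diff_less: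
  assumes "\<forall>n<N. p n < N" and "n < N"
  shows "\<bar>path_diff N p n\<bar> < int N"
proof -
  have "p (Suc n mod N) < N" and "p n < N"
    using assms by simp_all
  then show ?thesis
    unfolding path_diff_def by linarith
qed

lemma path_common_divisor_dvd_one:
  fixes g :: int
  assumes "is_path N p" and "2 \<le> N" and divides_steps: "\<forall>n<N. g dvd path_diff N p n"
  shows "g dvd 1"
proof -
  have dvd_from_start: "g dvd int (p k) - int (p 0)" if "k < N" for k
    using that
  proof (induction k)
    case (Suc k)
    then have "g dvd path_diff N p k"
      using divides_steps by simp
    with Suc.prems have "g dvd int (p (Suc k)) - int (p k)"
      by (simp add: path_diff_def)
    with Suc show ?case
      using dvd_add by fastforce
  qed simp
  have "{0, 1} \<subseteq> p ` {..<N}"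
    using assms(1,2) by (auto simp: is_path_def bij_betw_def)
  then obtain a b where "a < N" "p a = 0" "b < N" "p b = 1"
    by (metis empty_subsetI imageE insert_subset lessThan_iff)
  then show ?thesis
    using dvd_diff[OF dvd_from_start[of b] dvd_from_start[of a]] by simp
qed

lemma perfect_star_path_necessary:
  assumes "0 < N" and "0 < L" and perfect: "perfect_star_path N L p"
  shows "coprime L N \<and> 2 \<le> L \<and> 2 * L < N"
proof -
  have path: "is_path N p"
    using perfect by (simp add: perfect_star_path_def star_path_def)
  then have "\<forall>n<N. p n < N"
    by (auto simp: is_path_def bij_betw_def)
  then have edges: "2 * L \<le> N \<and> (\<bar>path_diff N p n\<bar> = int L \<or> \<bar>path_diff N p n\<bar> = int N - int L)"
    if "n < N" for n
    using perfect that abs_path_diff_less abs_step_of_eq_iff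
    by (simp add: perfect_star_path_def path_step_def)
  have "2 * L \<le> N"
    using edges \<open>0 < N\<close> by blast
  have "L \<noteq> 1"
    using perfect \<open>0 < N\<close> by (auto simp: perfect_star_path_def star_path_def)
  have "int (gcd L N) dvd path_diff N p n" if "n < N" for n
  proof -
    have "int (gcd L N) dvd int L" and "int (gcd L N) dvd int N - int L"
      by (simp_all add: int_dvd_int_iff dvd_diff)
    then show ?thesis
      using edges[OF that] by (metis dvd_abs_iff)
  qed
  then have "int (gcd L N) dvd 1"
    using \<open>0 < L\<close> \<open>2 * L \<le> N\<close> by (intro path_common_divisor_dvd_one[OF path]) auto
  then have "coprime L N"
    by (simp add: coprime_iff_gcd_eq_1)
  moreover have "2 * L \<noteq> N"
    using \<open>coprime L N\<close> \<open>L \<noteq> 1\<close> by auto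
  ultimately show ?thesis
    using \<open>0 < L\<close> \<open>L \<noteq> 1\<close> \<open>2 * L \<le> N\<close> by auto
qed

lemma bij_betw_mult_mod:
  fixes L N :: nat
  assumes "coprime L N"
  shows "bij_betw (\<lambda>n. n * L mod N) {..<N} {..<N}"
proof -
  have "inj_on (\<lambda>n. n * L mod N) {..<N}"
  proof (rule inj_onI)
    fix a b
    assume "a \<in> {..<N}" "b \<in> {..<N}" and "a * L mod N = b * L mod N"
    moreover from this have "[a = b] (mod N)"
      using cong_mult_rcancel_nat[OF assms] by (simp add: cong_def)
    ultimately show "a = b"
      using cong_less_modulus_unique_nat by simp
  qed
  moreover have "(\<lambda>n. n * L mod N) ` {..<N} \<subseteq> {..<N}"
    by auto
  ultimately show ?thesis
    by (simp add: bij_betw_def endo_inj_surj)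
qed

lemma path_diff_mult_mod_cong:
  "[path_diff N (\<lambda>n. n * L mod N) n = int L] (mod int N)"
proof -
  have "[int (Suc n mod N * L mod N) = int (Suc n * L)] (mod int N)"
    by (simp only: cong_int_iff cong_mod_left) (simp only: cong_def mod_mult_left_eq)
  moreover have "[int (n * L mod N) = int (n * L)] (mod int N)"
    by (simp only: cong_int_iff cong_mod_left cong_refl)
  ultimately have "[path_diff N (\<lambda>n. n * L mod N) n = int (Suc n * L) - int (n * L)] (mod int N)"
    unfolding path_diff_def by (rule cong_diff)
  then show ?thesis
    by (simp add: algebra_simps)
qed

lemma abs_eq_residue_or_complement:
  fixes d :: int
  assumes "[d = int L] (mod int N)" and "\<bar>d\<bar> < int N" and "L < N"
  shows "\<bar>d\<bar> = int L \<or> \<bar>d\<bar> = int N - int L"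
proof (cases "0 \<le> d")
  case True
  have "d = int L"
    by (rule cong_less_imp_eq_int[rotated 4, OF assms(1)]) (use True assms(2,3) in auto)
  then show ?thesis
    by simp
next
  case False
  have "[d + int N = int L] (mod int N)"
    using assms(1) by (simp add: cong_def)
  then have "d + int N = int L"
    by (rule cong_less_imp_eq_int[rotated 4]) (use False assms(2,3) in auto)
  with False show ?thesis
    by auto
qed

lemma perfect_star_path_mult_mod:
  assumes "coprime L N" and "2 \<le> L" and "2 * L < N"
  shows "perfect_star_path N L (\<lambda>n. n * L mod N)"
proof -
  have path: "is_path N (\<lambda>n. n * L mod N)"
    using bij_betw_mult_mod[OF assms(1)] by (simp add: is_path_def)
  have "\<bar>path_step N (\<lambda>n. n * L mod N) n\<bar> = real L" if "n < N" for n
  proof -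
    have "\<bar>path_diff N (\<lambda>n. n * L mod N) n\<bar> < int N"
      using abs_path_diff_less that by simp
    with abs_eq_residue_or_complement[OF path_diff_mult_mod_cong] show ?thesis
      using assms(3) abs_step_of_eq_iff by (simp add: path_step_def)
  qed
  with path assms(2) show ?thesis
    by (simp add: perfect_star_path_def star_path_def)
qed

theorem mainTheorem8:
  fixes N L :: nat
  assumes "N > 0" and "L > 0"
  shows "(\<exists>p. perfect_star_path N L p) \<longleftrightarrow>
           coprime L N \<and> 2 \<le> L \<and> real L < real N / 2 \<and> N \<ge> 5"
proof -
  have "real L < real N / 2 \<longleftrightarrow> 2 * L < N"
    by linarith
  moreover have "(\<exists>p. perfect_star_path N L p) \<longleftrightarrow> coprime L N \<and> 2 \<le> L \<and> 2 * L < N"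
    using perfect_star_path_necessary[OF assms] perfect_star_path_mult_mod by blast
  ultimately show ?thesis
    by auto
qed

end
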